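(* Let $\Gamma$ be a finite group, let $\mathcal{S}_\Gamma$ be a Schur ring over $\Gamma$ with basis $\mathcal{B}[\mathcal{S}_\Gamma]$, and let $\gamma \in \Gamma$ have odd order $n$. Let $r$ and $t$ be integers such that $r - t$ is relatively prime to $n$. If $\gamma^r + \gamma^t$ is an element of $\mathcal{B}[\mathcal{S}_\Gamma]$, then $\gamma^s + \gamma^{-s}$ is also an element of $\mathcal{B}[\mathcal{S}_\Gamma]$ for every integer $s$ relatively prime to $n$.
   Context: For a subset $X \subseteq \Gamma$ write $\overline{X} = \sum_{x \in X} x \in \mathbb{Z}[\Gamma]$ (a "simple quantity"), and $X^{-1} = \{x^{-1} : x \in X\}$. A Schur ring over $\Gamma$ is a subring $\mathcal{S}$ of the group ring $\mathbb{Z}[\Gamma]$, closed under addition, multiplication and multiplication by integers, for which there is a partition $\{B_0, B_1, \dots, B_{r-1}\}$ of $\Gamma$ with $B_0 = \{1\}$ such that every element of $\mathcal{S}$ has a unique representation $\sum_{i} \beta_i \overline{B}_i$ with integer coefficients, $\sum_i \overline{B}_i = \overline{\Gamma}$, and for each $i$ there is $j$ with $\overline{B}_j = \overline{B_i^{-1}}$. The set $\{\overline{B}_0, \dots, \overline{B}_{r-1}\}$ is the basis $\mathcal{B}[\mathcal{S}]$ of the Schur ring, and its members are the basic elements. Thus "$\gamma^r + \gamma^t \in \mathcal{B}[\mathcal{S}_\Gamma]$" means $\{\gamma^r, \gamma^t\}$ is one of the basic sets. *)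

theory Defs
  imports "HOL-Algebra.Multiplicative_Group"
begin

text \<open>The integral group ring Z[G] of a finite group G: integer-valued functions
  on the carrier (zero outside it). Addition and integer scaling are pointwise,
  multiplication is convolution.\<close>

definition grp_ring :: "('a, 'b) monoid_scheme \<Rightarrow> ('a \<Rightarrow> int) set" where
  "grp_ring G = {f. \<forall>x. x \<notin> carrier G \<longrightarrow> f x = 0}"

definition grp_ring_add :: "('a \<Rightarrow> int) \<Rightarrow> ('a \<Rightarrow> int) \<Rightarrow> ('a \<Rightarrow> int)" where
  "grp_ring_add f g = (\<lambda>x. f x + g x)"

definition grp_ring_smult :: "int \<Rightarrow> ('a \<Rightarrow> int) \<Rightarrow> ('a \<Rightarrow> int)" where
  "grp_ring_smult k f = (\<lambda>x. k * f x)"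

definition grp_ring_mult ::
  "('a, 'b) monoid_scheme \<Rightarrow> ('a \<Rightarrow> int) \<Rightarrow> ('a \<Rightarrow> int) \<Rightarrow> ('a \<Rightarrow> int)" where
  "grp_ring_mult G f g =
     (\<lambda>x. if x \<in> carrier G
           then (\<Sum>y\<in>carrier G. f y * g (inv\<^bsub>G\<^esub> y \<otimes>\<^bsub>G\<^esub> x)) else 0)"

definition grp_elem :: "'a \<Rightarrow> ('a \<Rightarrow> int)" where
  "grp_elem g = (\<lambda>x. if x = g then 1 else 0)"

text \<open>Simple quantity: overline X = sum of the elements of X.\<close>
definition simple_qty :: "'a set \<Rightarrow> ('a \<Rightarrow> int)" where
  "simple_qty X = (\<lambda>x. if x \<in> X then 1 else 0)"

definition lin_comb :: "'a set set \<Rightarrow> ('a set \<Rightarrow> int) \<Rightarrow> ('a \<Rightarrow> int)" where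
  "lin_comb P \<beta> = (\<lambda>x. \<Sum>B\<in>P. \<beta> B * simple_qty B x)"

definition schur_ring ::
  "('a, 'b) monoid_scheme \<Rightarrow> ('a \<Rightarrow> int) set \<Rightarrow> 'a set set \<Rightarrow> bool" where
  "schur_ring G S P \<longleftrightarrow>
     S \<subseteq> grp_ring G \<and>
     (\<forall>f\<in>S. \<forall>g\<in>S. grp_ring_add f g \<in> S) \<and>
     (\<forall>f\<in>S. \<forall>g\<in>S. grp_ring_mult G f g \<in> S) \<and>
     (\<forall>k f. f \<in> S \<longrightarrow> grp_ring_smult k f \<in> S) \<and>
     (\<forall>B\<in>P. B \<subseteq> carrier G) \<and>
     (\<forall>B\<in>P. \<forall>C\<in>P. B \<noteq> C \<longrightarrow> B \<inter> C = {}) \<and>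
     \<Union>P = carrier G \<and>
     {\<one>\<^bsub>G\<^esub>} \<in> P \<and>
     S = {lin_comb P \<beta> | \<beta>. True} \<and>
     (\<forall>\<beta> \<beta>'. lin_comb P \<beta> = lin_comb P \<beta>' \<longrightarrow> (\<forall>B\<in>P. \<beta> B = \<beta>' B)) \<and>
     (\<lambda>x. \<Sum>B\<in>P. simple_qty B x) = simple_qty (carrier G) \<and>
     (\<forall>B\<in>P. \<exists>C\<in>P. simple_qty C = simple_qty ((\<lambda>x. inv\<^bsub>G\<^esub> x) ` B))"

definition schur_basis :: "'a set set \<Rightarrow> ('a \<Rightarrow> int) set" where
  "schur_basis P = simple_qty ` P"

end

theory Submission
  imports Defs "HOL-Number_Theory.Cong"
begin

text \<open>Let n be the order of \<gamma>. Squaring the basic element \<gamma>^r + \<gamma>^t gives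
  \<gamma>^(2r) + 2 \<gamma>^(r+t) + \<gamma>^(2t), whose exponents are distinct mod the odd number n; as the
  elements of a Schur ring are constant on basic sets, {\<gamma>^(r+t)} is a basic set, and then so
  is every power of \<gamma>^(r+t). Multiplying \<gamma>^r + \<gamma>^t by the basic singleton
  \<gamma>^(-(r+t)(n+1)/2) centres the pair: it becomes \<gamma>^u + \<gamma>^(-u) with 2u = r - t mod n,
  so u is a unit mod n. The recurrence
  (x + x^-1)(x^j + x^-j) = (x^(j+1) + x^-(j+1)) + (x^(j-1) + x^-(j-1))
  then puts \<gamma>^s + \<gamma>^-s into the ring for every unit s. The basic set containing \<gamma>^s
  lies inside {\<gamma>^s, \<gamma>^-s} and is not {\<gamma>^s}, for otherwise every power of the
  generator \<gamma>^s, in particular \<gamma>^r, would form a basic singleton.\<close>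

lemma grp_elem_eq_simple_qty: "grp_elem a = simple_qty {a}"
  by (simp add: grp_elem_def simple_qty_def fun_eq_iff)

lemma grp_elem_add_eq_simple_qty_iff:
  "grp_ring_add (grp_elem a) (grp_elem b) = simple_qty X \<longleftrightarrow> a \<noteq> b \<and> X = {a, b}"
proof
  assume "grp_ring_add (grp_elem a) (grp_elem b) = simple_qty X"
  then have pointwise: "(if x = a then 1 else 0) + (if x = b then 1 else 0) = (if x \<in> X then 1 else (0::int))"
    for x
    by (simp add: grp_ring_add_def grp_elem_def simple_qty_def fun_eq_iff)
  from pointwise[of a] have "a \<noteq> b" by (auto split: if_splits)
  moreover have "x \<in> X \<longleftrightarrow> x = a \<or> x = b" for x
    using pointwise[of x] \<open>a \<noteq> b\<close> by (auto split: if_splits)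
  then have "X = {a, b}" by blast
  ultimately show "a \<noteq> b \<and> X = {a, b}" ..
qed (auto simp: grp_ring_add_def grp_elem_def simple_qty_def fun_eq_iff)

lemma grp_elem_add_in_schur_basis_iff:
  "grp_ring_add (grp_elem a) (grp_elem b) \<in> schur_basis P \<longleftrightarrow> a \<noteq> b \<and> {a, b} \<in> P"
  by (auto simp: schur_basis_def grp_elem_add_eq_simple_qty_iff)

lemma grp_ring_add_commute: "grp_ring_add f g = grp_ring_add g f"
  by (simp add: grp_ring_add_def add.commute)

lemma grp_ring_mult_add_left:
  "grp_ring_mult G (grp_ring_add f g) h = grp_ring_add (grp_ring_mult G f h) (grp_ring_mult G g h)"
  by (simp add: grp_ring_mult_def grp_ring_add_def fun_eq_iff sum.distrib algebra_simps)

lemma grp_ring_mult_add_right: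
  "grp_ring_mult G h (grp_ring_add f g) = grp_ring_add (grp_ring_mult G h f) (grp_ring_mult G h g)"
  by (simp add: grp_ring_mult_def grp_ring_add_def fun_eq_iff sum.distrib algebra_simps)

definition elem_plus_inv :: "('a, 'b) monoid_scheme \<Rightarrow> 'a \<Rightarrow> ('a \<Rightarrow> int)" where
  "elem_plus_inv G x = grp_ring_add (grp_elem x) (grp_elem (inv\<^bsub>G\<^esub> x))"

context group
begin

lemma grp_elem_mult:
  assumes fin: "finite (carrier G)" and a: "a \<in> carrier G" and b: "b \<in> carrier G"
  shows "grp_ring_mult G (grp_elem a) (grp_elem b) = grp_elem (a \<otimes> b)"
proof
  fix x
  show "grp_ring_mult G (grp_elem a) (grp_elem b) x = grp_elem (a \<otimes> b) x"
  proof (cases "x \<in> carrier G")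
    case True
    have "(\<Sum>y\<in>carrier G. grp_elem a y * grp_elem b (inv y \<otimes> x))
        = (\<Sum>y\<in>carrier G. if y = a then grp_elem b (inv a \<otimes> x) else 0)"
      by (rule sum.cong) (auto simp: grp_elem_def)
    also have "\<dots> = grp_elem b (inv a \<otimes> x)"
      using fin a by simp
    also have "\<dots> = grp_elem (a \<otimes> b) x"
      using inv_solve_left[OF b a True] by (auto simp: grp_elem_def)
    finally show ?thesis using True by (simp add: grp_ring_mult_def)
  next
    case False
    then show ?thesis using a b by (auto simp: grp_ring_mult_def grp_elem_def)
  qed
qed

lemma int_pow_eq_iff_cong:
  "x \<in> carrier G \<Longrightarrow> x [^] i = x [^] j \<longleftrightarrow> [i = j] (mod int (ord x))"
  by (simp add: int_pow_eq cong_iff_dvd_diff dvd_diff_commute)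

lemma coprime_exponent_generates:
  fixes s i :: int
  assumes x: "x \<in> carrier G" and "coprime s (int (ord x))"
  obtains k :: int where "x [^] i = (x [^] s) [^] k"
proof -
  obtain y where "[s * y = 1] (mod int (ord x))"
    using cong_solve_coprime_int assms(2) by blast
  then have "[s * (y * i) = i] (mod int (ord x))"
    using cong_scalar_right[of "s * y" 1 _ i] by (simp add: mult.assoc)
  then have "x [^] i = (x [^] s) [^] (y * i)"
    using x by (simp add: int_pow_pow int_pow_eq_iff_cong cong_sym_eq)
  then show ?thesis by (rule that)
qed

lemma int_pow_neq_inv:
  assumes x: "x \<in> carrier G" "x \<noteq> \<one>" and "odd (ord x)" and "coprime s (int (ord x))"
  shows "x [^] s \<noteq> inv (x [^] s)"
proof
  assume "x [^] s = inv (x [^] s)"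
  then have "int (ord x) dvd 2 * s"
    using x by (simp flip: int_pow_neg add: int_pow_eq)
  moreover have "coprime (int (ord x)) 2" using \<open>odd (ord x)\<close> by simp
  ultimately have "int (ord x) dvd s" by (simp add: coprime_dvd_mult_right_iff)
  then have "ord x = 1" using \<open>coprime s (int (ord x))\<close> coprime_common_divisor by fastforce
  then show False using x ord_eq_1 by metis
qed

lemma elem_plus_inv_int_pow:
  "x \<in> carrier G \<Longrightarrow> elem_plus_inv G (x [^] (k::int)) = grp_ring_add (grp_elem (x [^] k)) (grp_elem (x [^] (- k)))"
  by (simp add: elem_plus_inv_def int_pow_neg)

lemma elem_plus_inv_mult:
  assumes fin: "finite (carrier G)" and x: "x \<in> carrier G"
  shows "grp_ring_mult G (elem_plus_inv G x) (elem_plus_inv G (x [^] (k::int))) =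
    grp_ring_add (elem_plus_inv G (x [^] (k + 1))) (elem_plus_inv G (x [^] (k - 1)))"
proof -
  have pow_mult: "grp_ring_mult G (grp_elem (x [^] i)) (grp_elem (x [^] j)) = grp_elem (x [^] (i + j))"
    for i j :: int
    using fin x by (simp add: grp_elem_mult int_pow_mult)
  have x_as_pow: "elem_plus_inv G x = grp_ring_add (grp_elem (x [^] (1::int))) (grp_elem (x [^] (-1::int)))"
    using x by (simp add: elem_plus_inv_def int_pow_neg)
  show ?thesis
    unfolding x_as_pow elem_plus_inv_int_pow[OF x] grp_ring_mult_add_left grp_ring_mult_add_right pow_mult
    by (simp add: grp_ring_add_def fun_eq_iff algebra_simps)
qed

end

locale finite_schur_ring = group G for G (structure) +
  fixes S :: "('a \<Rightarrow> int) set" and P :: "'a set set"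
  assumes finite_carrier: "finite (carrier G)"
    and schur_ring: "schur_ring G S P"
begin

lemma S_add_closed: "f \<in> S \<Longrightarrow> g \<in> S \<Longrightarrow> grp_ring_add f g \<in> S"
  using schur_ring unfolding schur_ring_def by metis

lemma S_mult_closed: "f \<in> S \<Longrightarrow> g \<in> S \<Longrightarrow> grp_ring_mult G f g \<in> S"
  using schur_ring unfolding schur_ring_def by metis

lemma S_smult_closed: "f \<in> S \<Longrightarrow> grp_ring_smult k f \<in> S"
  using schur_ring unfolding schur_ring_def by metis

lemma mem_S_iff: "f \<in> S \<longleftrightarrow> (\<exists>\<beta>. f = lin_comb P \<beta>)"
proof -
  have "S = {lin_comb P \<beta> | \<beta>. True}"
    using schur_ring unfolding schur_ring_def by metis
  then show ?thesis by blast
qed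

lemma basic_subset_carrier: "B \<in> P \<Longrightarrow> B \<subseteq> carrier G"
  using schur_ring unfolding schur_ring_def by metis

lemma basic_eqI:
  assumes "B \<in> P" "C \<in> P" "x \<in> B" "x \<in> C"
  shows "B = C"
proof -
  have "\<forall>B\<in>P. \<forall>C\<in>P. B \<noteq> C \<longrightarrow> B \<inter> C = {}"
    using schur_ring unfolding schur_ring_def by (elim conjE) assumption
  then show ?thesis using assms by blast
qed

lemma basic_cover:
  assumes "x \<in> carrier G"
  obtains B where "B \<in> P" "x \<in> B"
proof -
  have "\<Union>P = carrier G"
    using schur_ring unfolding schur_ring_def by (elim conjE) assumption
  then show ?thesis using assms that by blast
qed

lemma one_basic: "{\<one>} \<in> P"
  using schur_ring unfolding schur_ring_def by metis

lemma finite_basic_sets: "finite P"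
proof -
  have "P \<subseteq> Pow (carrier G)" using basic_subset_carrier by blast
  then show ?thesis using finite_carrier by (simp add: finite_subset)
qed

lemma lin_comb_basic: "B \<in> P \<Longrightarrow> x \<in> B \<Longrightarrow> lin_comb P \<beta> x = \<beta> B"
proof -
  assume "B \<in> P" "x \<in> B"
  then have "lin_comb P \<beta> x = (\<Sum>C\<in>P. if C = B then \<beta> B else 0)"
    unfolding lin_comb_def by (intro sum.cong) (auto simp: simple_qty_def dest: basic_eqI)
  then show ?thesis using \<open>B \<in> P\<close> finite_basic_sets by simp
qed

lemma simple_qty_in_S: "B \<in> P \<Longrightarrow> simple_qty B \<in> S"
proof -
  assume "B \<in> P"
  have "lin_comb P (\<lambda>C. if C = B then 1 else 0) = simple_qty B"
  proof
    fix x
    have "lin_comb P (\<lambda>C. if C = B then 1 else 0) x = (\<Sum>C\<in>P. if C = B then simple_qty B x else 0)"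
      unfolding lin_comb_def by (rule sum.cong) auto
    then show "lin_comb P (\<lambda>C. if C = B then 1 else 0) x = simple_qty B x"
      using \<open>B \<in> P\<close> finite_basic_sets by simp
  qed
  then show ?thesis using mem_S_iff by metis
qed

lemma S_const_on_basic: "f \<in> S \<Longrightarrow> B \<in> P \<Longrightarrow> x \<in> B \<Longrightarrow> y \<in> B \<Longrightarrow> f x = f y"
  using lin_comb_basic mem_S_iff by auto

lemma singleton_basicI:
  assumes "f \<in> S" "x \<in> carrier G" "\<And>y. y \<in> carrier G \<Longrightarrow> f y = f x \<Longrightarrow> y = x"
  shows "{x} \<in> P"
proof -
  obtain B where "B \<in> P" "x \<in> B" by (rule basic_cover[OF assms(2)])
  moreover have "y = x" if "y \<in> B" for y
  proof (rule assms(3))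
    show "y \<in> carrier G" using basic_subset_carrier \<open>B \<in> P\<close> that by blast
    show "f y = f x" using S_const_on_basic[OF assms(1) \<open>B \<in> P\<close> that \<open>x \<in> B\<close>] .
  qed
  ultimately have "B = {x}" by blast
  with \<open>B \<in> P\<close> show ?thesis by simp
qed

lemma basic_pairI:
  assumes "grp_ring_add (grp_elem a) (grp_elem b) \<in> S" "a \<in> carrier G" "a \<noteq> b" "{a} \<notin> P"
  shows "{a, b} \<in> P"
proof -
  obtain B where B: "B \<in> P" "a \<in> B" by (rule basic_cover[OF assms(2)])
  have "B \<subseteq> {a, b}"
  proof
    fix y assume "y \<in> B"
    have "grp_ring_add (grp_elem a) (grp_elem b) y = grp_ring_add (grp_elem a) (grp_elem b) a"
      using S_const_on_basic[OF assms(1) B(1) \<open>y \<in> B\<close> B(2)] .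
    then have "grp_ring_add (grp_elem a) (grp_elem b) y = 1"
      using assms(3) by (simp add: grp_ring_add_def grp_elem_def)
    then show "y \<in> {a, b}" by (auto simp: grp_ring_add_def grp_elem_def split: if_splits)
  qed
  moreover have "B \<noteq> {a}" using B(1) assms(4) by blast
  ultimately have "B = {a, b}" using B(2) by blast
  with B(1) show ?thesis by simp
qed

lemma singleton_basic_pow:
  assumes "{c} \<in> P"
  shows "{c [^] (i::int)} \<in> P"
proof -
  have c: "c \<in> carrier G" using basic_subset_carrier assms by blast
  have elem_pow_in_S: "grp_elem (c [^] m) \<in> S" for m :: nat
  proof (induction m)
    case 0
    then show ?case using simple_qty_in_S[OF one_basic] by (simp add: grp_elem_eq_simple_qty)
  next
    case (Suc m)
    have "grp_ring_mult G (grp_elem (c [^] m)) (grp_elem c) \<in> S"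
      using S_mult_closed[OF Suc simple_qty_in_S[OF assms]] by (simp add: grp_elem_eq_simple_qty)
    then show ?case using c finite_carrier by (simp add: grp_elem_mult)
  qed
  define m where "m = nat (i mod int (ord c))"
  have "int m = i mod int (ord c)"
    using ord_ge_1[OF finite_carrier c] by (simp add: m_def)
  then have "c [^] i = c [^] m"
    using c by (simp flip: int_pow_int add: int_pow_eq_iff_cong cong_def)
  moreover have "{c [^] m} \<in> P"
    by (rule singleton_basicI[OF elem_pow_in_S[of m]]) (auto simp: c grp_elem_def split: if_splits)
  ultimately show ?thesis by simp
qed

lemma singleton_basic_generator:
  fixes s :: int
  assumes "x \<in> carrier G" "coprime s (int (ord x))" "{x [^] s} \<in> P"
  shows "{x [^] (i::int)} \<in> P"
proof -
  obtain k :: int where "x [^] i = (x [^] s) [^] k" using coprime_exponent_generates[OF assms(1,2), of i] .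
  then show ?thesis using singleton_basic_pow[OF assms(3)] by simp
qed

lemma coprime_pow_not_singleton_basic:
  fixes r s t :: int
  assumes "g \<in> carrier G" "coprime s (int (ord g))"
    and ne: "g [^] r \<noteq> g [^] t" and rt: "{g [^] r, g [^] t} \<in> P"
  shows "{g [^] s} \<notin> P"
proof
  assume "{g [^] s} \<in> P"
  then have "{g [^] r} \<in> P" using singleton_basic_generator[OF assms(1,2)] by blast
  then have "{g [^] r} = {g [^] r, g [^] t}" using basic_eqI rt by blast
  then show False using ne by (metis insertI1 insert_commute singletonD)
qed

lemma basic_pair_square:
  assumes ab: "{a, b} \<in> P" "a \<noteq> b" and comm: "a \<otimes> b = b \<otimes> a" and squares: "a \<otimes> a \<noteq> b \<otimes> b"
  shows "{a \<otimes> b} \<in> P"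
proof -
  have a: "a \<in> carrier G" and b: "b \<in> carrier G" using basic_subset_carrier ab(1) by auto
  define f where "f = grp_ring_mult G (simple_qty {a, b}) (simple_qty {a, b})"
  have "f \<in> S" unfolding f_def using S_mult_closed simple_qty_in_S ab(1) by blast
  have pair: "simple_qty {a, b} = grp_ring_add (grp_elem a) (grp_elem b)"
    using grp_elem_add_eq_simple_qty_iff ab(2) by metis
  have "f = grp_ring_add (grp_ring_add (grp_elem (a \<otimes> a)) (grp_elem (b \<otimes> a)))
      (grp_ring_add (grp_elem (a \<otimes> b)) (grp_elem (b \<otimes> b)))"
    unfolding f_def pair grp_ring_mult_add_left grp_ring_mult_add_right
    using finite_carrier a b by (simp add: grp_elem_mult)
  then have f: "f y = (if y = a \<otimes> a then 1 else 0) + 2 * (if y = a \<otimes> b then 1 else 0)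
      + (if y = b \<otimes> b then 1 else 0)" for y
    by (simp add: comm grp_ring_add_def grp_elem_def)
  have "a \<otimes> a \<noteq> a \<otimes> b" "b \<otimes> b \<noteq> a \<otimes> b" using a b ab(2) comm by auto
  show ?thesis
  proof (rule singleton_basicI[OF \<open>f \<in> S\<close>])
    show "a \<otimes> b \<in> carrier G" using a b by simp
    fix y assume "f y = f (a \<otimes> b)"
    then show "y = a \<otimes> b"
      using \<open>a \<otimes> a \<noteq> a \<otimes> b\<close> \<open>b \<otimes> b \<noteq> a \<otimes> b\<close> squares by (auto simp: f split: if_splits)
  qed
qed

lemma elem_plus_inv_pow_in_S:
  assumes x: "x \<in> carrier G" and "elem_plus_inv G x \<in> S"
  shows "elem_plus_inv G (x [^] (k::int)) \<in> S"
proof -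
  have recurrence: "elem_plus_inv G (x [^] (j + 1)) = grp_ring_add
      (grp_ring_mult G (elem_plus_inv G x) (elem_plus_inv G (x [^] j)))
      (grp_ring_smult (-1) (elem_plus_inv G (x [^] (j - 1))))" for j :: int
    unfolding elem_plus_inv_mult[OF finite_carrier x]
    by (simp add: grp_ring_add_def grp_ring_smult_def fun_eq_iff)
  have "elem_plus_inv G (x [^] int m) \<in> S \<and> elem_plus_inv G (x [^] (int m + 1)) \<in> S" for m :: nat
  proof (induction m)
    case 0
    have "elem_plus_inv G (x [^] (0::int)) = grp_ring_smult 2 (simple_qty {\<one>})"
      by (simp add: elem_plus_inv_def grp_elem_eq_simple_qty grp_ring_add_def grp_ring_smult_def fun_eq_iff)
    then show ?case using assms(2) S_smult_closed simple_qty_in_S one_basic x by simp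
  next
    case (Suc m)
    then show ?case
      using recurrence[of "int m + 1"] S_add_closed S_mult_closed S_smult_closed assms(2)
      by (simp add: add.commute)
  qed
  moreover have "elem_plus_inv G (x [^] (- j)) = elem_plus_inv G (x [^] j)" for j :: int
    using x by (simp add: elem_plus_inv_def int_pow_neg grp_ring_add_commute)
  ultimately show ?thesis by (cases k rule: int_cases) (auto simp del: of_nat_Suc)
qed

lemma elem_plus_inv_from_basic_pair:
  fixes r t :: int
  assumes g: "g \<in> carrier G" and odd: "odd (ord g)"
    and ne: "g [^] r \<noteq> g [^] t" and rt: "{g [^] r, g [^] t} \<in> P"
  obtains u :: int where "[2 * u = r - t] (mod int (ord g))" "elem_plus_inv G (g [^] u) \<in> S"
proof -
  let ?n = "int (ord g)"
  have pow_mult: "g [^] i \<otimes> g [^] j = g [^] (i + j)" for i j :: int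
    using g by (simp add: int_pow_mult)
  have "coprime 2 ?n" using odd by simp
  then have "g [^] (r + r) \<noteq> g [^] (t + t)"
    using ne g by (simp add: int_pow_eq_iff_cong flip: mult_2 add: cong_mult_lcancel)
  then have "{g [^] (r + t)} \<in> P"
    using basic_pair_square[OF rt ne] by (simp add: pow_mult add.commute)
  \<comment> \<open>h inverts 2 mod n, so the factor g^(-(r+t)h) moves the pair {g^r, g^t} to {g^u, g^-u}\<close>
  define h where "h = (?n + 1) div 2"
  have "even (?n + 1)" using odd by simp
  then have "2 * h = ?n + 1" unfolding h_def by (rule dvd_mult_div_cancel)
  then have h: "(r + t) * h * 2 = (r + t) * (?n + 1)" by (metis mult.assoc mult.commute)
  define u where "u = r - (r + t) * h"
  have "{g [^] ((r + t) * - h)} \<in> P"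
    using singleton_basic_pow[OF \<open>{g [^] (r + t)} \<in> P\<close>, of "- h"] by (simp only: int_pow_pow[OF g])
  then have "grp_ring_mult G (simple_qty {g [^] r, g [^] t}) (grp_elem (g [^] ((r + t) * - h))) \<in> S"
    using rt by (simp add: S_mult_closed simple_qty_in_S grp_elem_eq_simple_qty)
  also have "grp_ring_mult G (simple_qty {g [^] r, g [^] t}) (grp_elem (g [^] ((r + t) * - h)))
      = elem_plus_inv G (g [^] u)"
  proof -
    have "[t - (r + t) * h = - u] (mod ?n)"
      unfolding cong_iff_lin by (rule exI[of _ "r + t"]) (use h in \<open>simp add: u_def algebra_simps\<close>)
    then have "g [^] (t - (r + t) * h) = inv (g [^] u)"
      using g by (simp add: int_pow_eq_iff_cong flip: int_pow_neg)
    moreover have "simple_qty {g [^] r, g [^] t} = grp_ring_add (grp_elem (g [^] r)) (grp_elem (g [^] t))"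
      using grp_elem_add_eq_simple_qty_iff ne by metis
    ultimately show ?thesis
      using finite_carrier g
      by (simp add: grp_ring_mult_add_left grp_elem_mult pow_mult elem_plus_inv_def u_def)
  qed
  finally have "elem_plus_inv G (g [^] u) \<in> S" .
  moreover have "[2 * u = r - t] (mod ?n)"
    unfolding cong_iff_lin by (rule exI[of _ "r + t"]) (use h in \<open>simp add: u_def algebra_simps\<close>)
  ultimately show ?thesis using that by blast
qed

end

theorem lemma2p1:
  fixes G (structure) and S :: "('a \<Rightarrow> int) set" and P :: "'a set set"
    and \<gamma> :: 'a and r t :: int
  assumes "group G" and "finite (carrier G)"
    and "schur_ring G S P"
    and "\<gamma> \<in> carrier G"
    and "odd (group.ord G \<gamma>)"
    and "coprime (r - t) (int (group.ord G \<gamma>))"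
    and "grp_ring_add (grp_elem (\<gamma> [^] r)) (grp_elem (\<gamma> [^] t)) \<in> schur_basis P"
  shows "\<forall>s::int. coprime s (int (group.ord G \<gamma>)) \<longrightarrow>
           grp_ring_add (grp_elem (\<gamma> [^] s)) (grp_elem (\<gamma> [^] (- s))) \<in> schur_basis P"
proof (intro allI impI)
  interpret finite_schur_ring G S P
    using assms(1-3) by (simp add: finite_schur_ring_def finite_schur_ring_axioms_def)
  fix s assume s: "coprime s (int (ord \<gamma>))"
  have ne: "\<gamma> [^] r \<noteq> \<gamma> [^] t" and rt: "{\<gamma> [^] r, \<gamma> [^] t} \<in> P"
    using assms(7) by (simp_all add: grp_elem_add_in_schur_basis_iff)
  obtain u where "[2 * u = r - t] (mod int (ord \<gamma>))" and u: "elem_plus_inv G (\<gamma> [^] u) \<in> S"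
    using elem_plus_inv_from_basic_pair[OF assms(4,5) ne rt] .
  then have "coprime (2 * u) (int (ord \<gamma>))"
    using cong_imp_coprime[OF cong_sym assms(6)] by blast
  then have "coprime u (int (ord \<gamma>))" by simp
  then obtain k :: int where "\<gamma> [^] s = (\<gamma> [^] u) [^] k"
    using coprime_exponent_generates[OF assms(4)] by blast
  then have "elem_plus_inv G (\<gamma> [^] s) \<in> S"
    using elem_plus_inv_pow_in_S[OF _ u] assms(4) by simp
  moreover have "{\<gamma> [^] s} \<notin> P"
    using coprime_pow_not_singleton_basic[OF assms(4) s ne rt] .
  moreover have "\<gamma> \<noteq> \<one>" using ne by auto
  then have "\<gamma> [^] s \<noteq> inv (\<gamma> [^] s)" using int_pow_neq_inv assms(4,5) s by blast
  ultimately have "{\<gamma> [^] s, inv (\<gamma> [^] s)} \<in> P"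
    using basic_pairI assms(4) by (simp add: elem_plus_inv_def)
  then show "grp_ring_add (grp_elem (\<gamma> [^] s)) (grp_elem (\<gamma> [^] (- s))) \<in> schur_basis P"
    using \<open>\<gamma> [^] s \<noteq> inv (\<gamma> [^] s)\<close> assms(4) by (simp add: grp_elem_add_in_schur_basis_iff int_pow_neg)
qed

end
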